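(* Assume the stationary generator setting described in the context, and let $k\ge1$. Then $$H(R_0\mid Y_{1:k},R_k)-H(R_k\mid Y_{1:k},R_0)+\zeta_R(k)=I\big(\overleftarrow Y;R_0\,\big|\,\overrightarrow Y,R_k\big).$$ Consequently, for any random variable $X_{\rm dflt}$ on a finite alphabet with $X_{\rm dflt}^{\otimes k}$ ($k$ i.i.d. copies) independent of $R_0$, $$H\big(R_0,X_{\rm dflt}^{\otimes k}\big)-H\big(R_k,Y_{1:k}\big)=k\big[H(X_{\rm dflt})-h_Y\big]+I\big(\overleftarrow Y;R_0\,\big|\,\overrightarrow Y,R_k\big)\;\ge\;k\big[H(X_{\rm dflt})-h_Y\big].$$
   Context: Stationary generator setting: $\mathcal Y$ and $\mathcal R$ are finite sets. $(Y_t,R_t)_{t\in\mathbb Z}$ is a jointly stationary (shift-invariant) bi-infinite stochastic process with $Y_t\in\mathcal Y$ (the pattern) and $R_t\in\mathcal R$ (the memory state of the device after $Y_t$ has been produced). Generator condition: for every $t$, the collection $\big((Y_s)_{s\le t},(R_s)_{s<t}\big)$ is conditionally independent of $\big((Y_s)_{s>t},(R_s)_{s>t}\big)$ given $R_t$. Notation: $Y_{a:b}=(Y_a,\dots,Y_b)$; the past is $\overleftarrow{Y}=(\dots,Y_{-1},Y_0)$ and the future is $\overrightarrow{Y}=(Y_1,Y_2,\dots)$. Information quantities involving $\overleftarrow Y$ or $\overrightarrow Y$ are defined as limits $L\to\infty$ of the corresponding quantities with $Y_{-L+1:0}$ resp. $Y_{1:L}$. $H$ denotes Shannon entropy, $I(A;B\mid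 C)=H(A\mid C)-H(A\mid B,C)$ is conditional mutual information. The entropy rate is $h_Y=H(Y_1\mid\overleftarrow Y)$. The oracular information is $\zeta_R(k):=I(Y_{1:k};R_0\mid\overleftarrow Y)$. The quantity $I(\overleftarrow Y;R_0\mid\overrightarrow Y,R_k)$ is called the discarded cryptic information. *)

theory Defs
  imports "HOL-Probability.Probability"
begin

definition ent :: "'w measure \<Rightarrow> ('w \<Rightarrow> 'a) \<Rightarrow> real" where
  "ent M X = - (\<Sum>x \<in> X ` space M.
       measure M {w \<in> space M. X w = x} * log 2 (measure M {w \<in> space M. X w = x}))"

definition cond_ent :: "'w measure \<Rightarrow> ('w \<Rightarrow> 'a) \<Rightarrow> ('w \<Rightarrow> 'b) \<Rightarrow> real" where
  "cond_ent M A B = ent M (\<lambda>w. (A w, B w)) - ent M B"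

definition cmi :: "'w measure \<Rightarrow> ('w \<Rightarrow> 'a) \<Rightarrow> ('w \<Rightarrow> 'b) \<Rightarrow> ('w \<Rightarrow> 'c) \<Rightarrow> real" where
  "cmi M A B C = cond_ent M A C - cond_ent M A (\<lambda>w. (B w, C w))"

definition ywin :: "(int \<Rightarrow> 'w \<Rightarrow> 'y) \<Rightarrow> int \<Rightarrow> nat \<Rightarrow> 'w \<Rightarrow> 'y list" where
  "ywin Y a n w = map (\<lambda>i. Y (a + int i) w) [0..<n]"

definition cond_indep :: "'w measure \<Rightarrow> 'a measure \<Rightarrow> ('w \<Rightarrow> 'a) \<Rightarrow> 'b measure \<Rightarrow> ('w \<Rightarrow> 'b)
    \<Rightarrow> ('w \<Rightarrow> 'c) \<Rightarrow> bool" where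
  "cond_indep M MA A MB B Z \<longleftrightarrow>
     (\<forall>S\<in>sets MA. \<forall>T\<in>sets MB. \<forall>z.
        measure M {w \<in> space M. A w \<in> S \<and> B w \<in> T \<and> Z w = z} * measure M {w \<in> space M. Z w = z}
      = measure M {w \<in> space M. A w \<in> S \<and> Z w = z} * measure M {w \<in> space M. B w \<in> T \<and> Z w = z})"

definition indep_disc :: "'w measure \<Rightarrow> ('w \<Rightarrow> 'a) \<Rightarrow> ('w \<Rightarrow> 'b) \<Rightarrow> bool" where
  "indep_disc M A B \<longleftrightarrow> (\<forall>a b.
     measure M {w \<in> space M. A w = a \<and> B w = b}
       = measure M {w \<in> space M. A w = a} * measure M {w \<in> space M. B w = b})"

definition jointly_stationary :: "'w measure \<Rightarrow> (int \<Rightarrow> 'w \<Rightarrow> 'y) \<Rightarrow> (int \<Rightarrow> 'w \<Rightarrow> 'r) \<Rightarrow> bool" where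
  "jointly_stationary M Y R \<longleftrightarrow>
     distr M (PiM UNIV (\<lambda>_. count_space UNIV)) (\<lambda>w t. (Y t w, R t w))
   = distr M (PiM UNIV (\<lambda>_. count_space UNIV)) (\<lambda>w t. (Y (t + 1) w, R (t + 1) w))"

definition generator_cond :: "'w measure \<Rightarrow> (int \<Rightarrow> 'w \<Rightarrow> 'y) \<Rightarrow> (int \<Rightarrow> 'w \<Rightarrow> 'r) \<Rightarrow> bool" where
  "generator_cond M Y R \<longleftrightarrow> (\<forall>t::int.
     cond_indep M
       (PiM {..t} (\<lambda>_. count_space UNIV) \<Otimes>\<^sub>M PiM {..<t} (\<lambda>_. count_space UNIV))
       (\<lambda>w. (restrict (\<lambda>s. Y s w) {..t}, restrict (\<lambda>s. R s w) {..<t}))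
       (PiM {t<..} (\<lambda>_. count_space UNIV) \<Otimes>\<^sub>M PiM {t<..} (\<lambda>_. count_space UNIV))
       (\<lambda>w. (restrict (\<lambda>s. Y s w) {t<..}, restrict (\<lambda>s. R s w) {t<..}))
       (R t))"

definition entropy_rate :: "'w measure \<Rightarrow> (int \<Rightarrow> 'w \<Rightarrow> 'y) \<Rightarrow> real" where
  "entropy_rate M Y = lim (\<lambda>L. cond_ent M (Y 1) (ywin Y (1 - int L) L))"

definition oracular_info :: "'w measure \<Rightarrow> (int \<Rightarrow> 'w \<Rightarrow> 'y) \<Rightarrow> (int \<Rightarrow> 'w \<Rightarrow> 'r) \<Rightarrow> nat \<Rightarrow> real" where
  "oracular_info M Y R k = lim (\<lambda>L. cmi M (ywin Y 1 k) (R 0) (ywin Y (1 - int L) L))"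

text \<open>Discarded cryptic information I(past; R_0 | future, R_k)
  = lim_L I(Y_{-L+1:0}; R_0 | Y_{1:L}, R_k).\<close>
definition discarded_cryptic :: "'w measure \<Rightarrow> (int \<Rightarrow> 'w \<Rightarrow> 'y) \<Rightarrow> (int \<Rightarrow> 'w \<Rightarrow> 'r) \<Rightarrow> nat \<Rightarrow> real" where
  "discarded_cryptic M Y R k =
     lim (\<lambda>L. cmi M (ywin Y (1 - int L) L) (R 0) (\<lambda>w. (ywin Y 1 L w, R (int k) w)))"

end

theory Submission
  imports Defs
begin

text \<open>
  Every quantity involved is a finite combination of entropies of finite-valued random variables.
  The generator condition at time t makes any function of the past up to t conditionally
  independent of any function of the future after t given R_t, so that
  H(A, B, R_t) + H(R_t) = H(A, R_t) + H(B, R_t).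
  Used at t = 0 for the oracular information, and at t = 0 and t = k (together with
  stationarity) for the discarded cryptic information, this writes the pre-limit terms of both
  through the conditional entropies H(. | Y_{-L+1:0}), which are nonincreasing in L and hence
  converge. Both limits come out as k h_Y - H(Y_{1:k}, R_j) + H(R_0), with j = 0 and j = k
  respectively, and the first identity is their difference. The second one adds
  H(R_0, X^k) = H(R_0) + k H(X); the inequality is nonnegativity of conditional mutual
  information.
\<close>

section \<open>Entropy of finite-valued random variables\<close>

definition mass :: "'w measure \<Rightarrow> ('w \<Rightarrow> 'a) \<Rightarrow> 'a \<Rightarrow> real" where
  "mass M X x = measure M (X -` {x} \<inter> space M)"

lemma mass_nonneg: "0 \<le> mass M X x"
  unfolding mass_def by simp

lemma ent_eq_sum_mass: "ent M X = - (\<Sum>x\<in>X ` space M. mass M X x * log 2 (mass M X x))"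
proof -
  have "{w \<in> space M. X w = x} = X -` {x} \<inter> space M" for x
    by auto
  then show ?thesis
    unfolding ent_def mass_def by simp
qed

lemma ent_eq_sum_mass_superset:
  assumes "finite T" "X ` space M \<subseteq> T"
  shows "ent M X = - (\<Sum>x\<in>T. mass M X x * log 2 (mass M X x))"
proof -
  have "mass M X x = 0" if "x \<in> T - X ` space M" for x
  proof -
    have "X -` {x} \<inter> space M = {}"
      using that by auto
    then show ?thesis
      unfolding mass_def by simp
  qed
  then show ?thesis
    unfolding ent_eq_sum_mass by (simp add: sum.mono_neutral_left[OF assms])
qed

lemma ent_cong:
  assumes "\<And>w. w \<in> space M \<Longrightarrow> X w = X' w"
  shows "ent M X = ent M X'"
proof -
  have "X ` space M = X' ` space M" "\<And>x. {w \<in> space M. X w = x} = {w \<in> space M. X' w = x}"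
    using assms by (auto simp: image_def)
  then show ?thesis
    unfolding ent_def by simp
qed

lemma ent_eq_if_distr_eq:
  assumes X: "simple_function M X" and X': "simple_function M X'"
    and distr_eq: "distr M (count_space UNIV) X = distr M (count_space UNIV) X'"
  shows "ent M X = ent M X'"
proof -
  have "mass M X x = mass M X' x" for x
    using arg_cong[OF distr_eq, of "\<lambda>N. measure N {x}"]
    unfolding mass_def
    by (simp add: measure_distr measurable_simple_function[OF X] measurable_simple_function[OF X'])
  moreover have "finite (X ` space M \<union> X' ` space M)"
    using simple_functionD(1)[OF X] simple_functionD(1)[OF X'] by simp
  ultimately show ?thesis
    by (simp add: ent_eq_sum_mass_superset[of "X ` space M \<union> X' ` space M"])
qed

lemma measurable_pair_count_space:
  fixes f :: "'w \<Rightarrow> 'a::countable" and g :: "'w \<Rightarrow> 'b::countable"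
  assumes "f \<in> measurable M (count_space UNIV)" "g \<in> measurable M (count_space UNIV)"
  shows "(\<lambda>w. (f w, g w)) \<in> measurable M (count_space UNIV)"
  using measurable_Pair[OF assms] by (simp add: pair_measure_countable)

lemma measurable_map_list:
  fixes g :: "'i \<Rightarrow> 'w \<Rightarrow> 'a::countable"
  assumes "\<And>i. i \<in> set xs \<Longrightarrow> g i \<in> measurable M (count_space UNIV)"
  shows "(\<lambda>w. map (\<lambda>i. g i w) xs) \<in> measurable M (count_space UNIV)"
  using assms
proof (induction xs)
  case (Cons x xs)
  have "(\<lambda>w. (g x w, map (\<lambda>i. g i w) xs)) \<in> measurable M (count_space UNIV)"
    using Cons by (intro measurable_pair_count_space) auto
  from measurable_compose[OF this measurable_count_space[of "case_prod Cons"]] show ?case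
    by simp
qed simp

lemma simple_function_finite_type:
  fixes f :: "'w \<Rightarrow> 'a::finite"
  assumes "f \<in> measurable M (count_space UNIV)"
  shows "simple_function M f"
  using assms by (simp add: simple_function_eq_measurable)

lemma simple_function_map_list:
  fixes g :: "'i \<Rightarrow> 'w \<Rightarrow> 'a::finite"
  assumes "\<And>i. i \<in> set xs \<Longrightarrow> g i \<in> measurable M (count_space UNIV)"
  shows "simple_function M (\<lambda>w. map (\<lambda>i. g i w) xs)"
proof -
  have "(\<lambda>w. map (\<lambda>i. g i w) xs) ` space M \<subseteq> {ys. set ys \<subseteq> UNIV \<and> length ys = length xs}"
    by auto
  moreover have "finite {ys :: 'a list. set ys \<subseteq> UNIV \<and> length ys = length xs}"
    by (rule finite_lists_length_eq) simp
  ultimately have "finite ((\<lambda>w. map (\<lambda>i. g i w) xs) ` space M)"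
    by (rule finite_subset)
  then show ?thesis
    using measurable_map_list[OF assms] by (simp add: simple_function_eq_measurable)
qed

context prob_space
begin

lemma ent_const: "ent M (\<lambda>w. c) = 0"
proof -
  have "(\<lambda>w. c) ` space M = {c}"
    using not_empty by auto
  moreover have "mass M (\<lambda>w. c) c = 1"
    unfolding mass_def by (simp add: prob_space)
  ultimately show ?thesis
    unfolding ent_eq_sum_mass by simp
qed

lemma mass_comp_eq_sum:
  assumes V: "simple_function M V"
  shows "mass M (\<lambda>w. f (V w)) y = (\<Sum>v\<in>{v \<in> V ` space M. f v = y}. mass M V v)"
proof -
  have "(\<lambda>w. f (V w)) -` {y} \<inter> space M = (\<Union>v\<in>{v \<in> V ` space M. f v = y}. V -` {v} \<inter> space M)"
    by auto
  moreover have "measure M (\<Union>v\<in>{v \<in> V ` space M. f v = y}. V -` {v} \<inter> space M)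
      = (\<Sum>v\<in>{v \<in> V ` space M. f v = y}. measure M (V -` {v} \<inter> space M))"
    using simple_functionD[OF V]
    by (intro finite_measure_finite_Union) (auto simp: disjoint_family_on_def)
  ultimately show ?thesis
    unfolding mass_def by simp
qed

lemma ent_comp_eq_sum:
  assumes V: "simple_function M V"
  shows "ent M (\<lambda>w. f (V w))
    = - (\<Sum>v\<in>V ` space M. mass M V v * log 2 (mass M (\<lambda>w. f (V w)) (f v)))"
proof -
  let ?S = "V ` space M" and ?fV = "\<lambda>w. f (V w)"
  have "(\<Sum>v\<in>?S. mass M V v * log 2 (mass M ?fV (f v)))
      = (\<Sum>y\<in>f ` ?S. \<Sum>v\<in>{v \<in> ?S. f v = y}. mass M V v * log 2 (mass M ?fV (f v)))"
    using simple_functionD(1)[OF V] by (rule sum.image_gen)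
  also have "\<dots> = (\<Sum>y\<in>f ` ?S. (\<Sum>v\<in>{v \<in> ?S. f v = y}. mass M V v) * log 2 (mass M ?fV y))"
    by (auto simp: sum_distrib_right intro!: sum.cong)
  also have "\<dots> = (\<Sum>y\<in>?fV ` space M. mass M ?fV y * log 2 (mass M ?fV y))"
    by (simp add: mass_comp_eq_sum[OF V] image_image)
  finally show ?thesis
    unfolding ent_eq_sum_mass by simp
qed

lemma mass_le_mass_comp:
  assumes V: "simple_function M V"
  shows "mass M V v \<le> mass M (\<lambda>w. f (V w)) (f v)"
proof -
  have "(\<lambda>w. f (V w)) -` {f v} \<inter> space M \<in> sets M"
    using simple_functionD(2)[OF simple_function_compose[OF V, of f]] by (simp add: comp_def)
  then show ?thesis
    unfolding mass_def by (intro finite_measure_mono) auto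
qed

lemma mass_comp_pos:
  assumes "simple_function M V" "mass M V v \<noteq> 0"
  shows "0 < mass M (\<lambda>w. f (V w)) (f v)"
  using mass_le_mass_comp[OF assms(1), of v f] mass_nonneg[of M V v] assms(2) by linarith

lemma ent_relabel:
  assumes Z: "simple_function M Z"
    and X_Z: "\<And>w. w \<in> space M \<Longrightarrow> X w = g (Z w)"
    and Z_X: "\<And>w. w \<in> space M \<Longrightarrow> Z w = h (X w)"
  shows "ent M X = ent M Z"
proof -
  have "mass M (\<lambda>w. g (Z w)) (g z) = mass M Z z" if "z \<in> Z ` space M" for z
  proof -
    have "h (g z) = z"
      using that X_Z Z_X by force
    then have "(\<lambda>w. g (Z w)) -` {g z} \<inter> space M = Z -` {z} \<inter> space M"
      using X_Z Z_X by force
    then show ?thesis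
      unfolding mass_def by simp
  qed
  then have "ent M (\<lambda>w. g (Z w)) = ent M Z"
    unfolding ent_comp_eq_sum[OF Z] ent_eq_sum_mass[of M Z] by simp
  moreover have "ent M X = ent M (\<lambda>w. g (Z w))"
    using X_Z by (rule ent_cong)
  ultimately show ?thesis
    by simp
qed

lemma ent_swap:
  assumes "simple_function M A" "simple_function M B"
  shows "ent M (\<lambda>w. (A w, B w)) = ent M (\<lambda>w. (B w, A w))"
  by (rule ent_relabel[where g = prod.swap and h = prod.swap]) (use assms in auto)

lemma cmi_eq_sum:
  assumes A: "simple_function M A" and B: "simple_function M B" and C: "simple_function M C"
  defines "V \<equiv> \<lambda>w. (A w, B w, C w)"
  shows "cmi M A B C = (\<Sum>(a, b, c)\<in>V ` space M. mass M V (a, b, c) *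
    log 2 (mass M V (a, b, c) /
      (mass M (\<lambda>w. (A w, C w)) (a, c) * (mass M (\<lambda>w. (B w, C w)) (b, c) / mass M C c))))"
proof -
  have V: "simple_function M V"
    unfolding V_def using A B C by simp
  let ?AC = "\<lambda>w. (A w, C w)" and ?BC = "\<lambda>w. (B w, C w)"
  have ent_V: "ent M (\<lambda>w. (A w, B w, C w)) = - (\<Sum>v\<in>V ` space M. mass M V v * log 2 (mass M V v))"
    unfolding V_def by (rule ent_eq_sum_mass)
  have ent_C: "ent M C = - (\<Sum>(a, b, c)\<in>V ` space M. mass M V (a, b, c) * log 2 (mass M C c))"
    using ent_comp_eq_sum[OF V, of "\<lambda>(a, b, c). c"] by (simp add: V_def split_beta)
  have ent_AC: "ent M ?AC = - (\<Sum>(a, b, c)\<in>V ` space M. mass M V (a, b, c) * log 2 (mass M ?AC (a, c)))"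
    using ent_comp_eq_sum[OF V, of "\<lambda>(a, b, c). (a, c)"] by (simp add: V_def split_beta)
  have ent_BC: "ent M ?BC = - (\<Sum>(a, b, c)\<in>V ` space M. mass M V (a, b, c) * log 2 (mass M ?BC (b, c)))"
    using ent_comp_eq_sum[OF V, of "\<lambda>(a, b, c). (b, c)"] by (simp add: V_def split_beta)
  have "mass M V (a, b, c) * log 2 (mass M V (a, b, c) / (mass M ?AC (a, c) * (mass M ?BC (b, c) / mass M C c)))
      = mass M V (a, b, c) * log 2 (mass M V (a, b, c)) + mass M V (a, b, c) * log 2 (mass M C c)
        - mass M V (a, b, c) * log 2 (mass M ?AC (a, c)) - mass M V (a, b, c) * log 2 (mass M ?BC (b, c))"
    for a b c
  proof (cases "mass M V (a, b, c) = 0")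
    case False
    have "0 < mass M V (a, b, c)"
      using False mass_nonneg[of M V] by (simp add: order_less_le)
    moreover have "0 < mass M C c" "0 < mass M ?AC (a, c)" "0 < mass M ?BC (b, c)"
      using mass_comp_pos[OF V False, of "\<lambda>(a, b, c). c"] mass_comp_pos[OF V False, of "\<lambda>(a, b, c). (a, c)"]
        mass_comp_pos[OF V False, of "\<lambda>(a, b, c). (b, c)"]
      by (simp_all add: V_def)
    ultimately show ?thesis
      by (simp add: log_divide log_mult algebra_simps)
  qed simp
  then show ?thesis
    unfolding cmi_def cond_ent_def ent_V ent_C ent_AC ent_BC
    by (simp add: split_beta sum_subtractf sum.distrib)
qed

lemma cmi_nonneg:
  assumes A: "simple_function M A" and B: "simple_function M B" and C: "simple_function M C"
  shows "0 \<le> cmi M A B C"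
proof -
  interpret information_space M 2
    by standard simp
  note distributed = simple_distributedI[OF _ mass_nonneg, unfolded mass_def[symmetric], OF _ refl]
  have "conditional_mutual_information 2 (count_space (A ` space M)) (count_space (B ` space M))
      (count_space (C ` space M)) A B C = cmi M A B C"
    unfolding cmi_eq_sum[OF A B C]
    by (rule conditional_mutual_information_eq) (rule distributed; use A B C in simp)+
  then show ?thesis
    using conditional_mutual_information_nonneg[OF A B C] by simp
qed

lemma cond_ent_nonneg:
  assumes A: "simple_function M A" and B: "simple_function M B"
  shows "0 \<le> cond_ent M A B"
proof -
  have "ent M (\<lambda>w. (A w, A w, B w)) = ent M (\<lambda>w. (A w, B w))"
    by (rule ent_relabel[where g = "\<lambda>(a, b). (a, a, b)" and h = snd]) (use A B in auto)
  then have "cond_ent M A B = cmi M A A B"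
    unfolding cmi_def cond_ent_def by simp
  then show ?thesis
    using cmi_nonneg[OF A A B] by simp
qed

lemma ent_split_if_cond_indep:
  assumes A: "simple_function M A" and B: "simple_function M B" and C: "simple_function M C"
    and factorizes: "\<And>a b c. mass M (\<lambda>w. (A w, B w, C w)) (a, b, c) * mass M C c
      = mass M (\<lambda>w. (A w, C w)) (a, c) * mass M (\<lambda>w. (B w, C w)) (b, c)"
  shows "ent M (\<lambda>w. (A w, B w, C w)) + ent M C = ent M (\<lambda>w. (A w, C w)) + ent M (\<lambda>w. (B w, C w))"
proof -
  let ?V = "\<lambda>w. (A w, B w, C w)" and ?AC = "\<lambda>w. (A w, C w)" and ?BC = "\<lambda>w. (B w, C w)"
  have V: "simple_function M ?V"
    using A B C by simp
  have summand_0: "mass M ?V (a, b, c) *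
    log 2 (mass M ?V (a, b, c) / (mass M ?AC (a, c) * (mass M ?BC (b, c) / mass M C c))) = 0" for a b c
  proof (cases "mass M ?V (a, b, c) = 0")
    case False
    have "mass M C c \<noteq> 0" "mass M ?AC (a, c) \<noteq> 0" "mass M ?BC (b, c) \<noteq> 0"
      using mass_comp_pos[OF V False, of "\<lambda>(a, b, c). c"] mass_comp_pos[OF V False, of "\<lambda>(a, b, c). (a, c)"]
        mass_comp_pos[OF V False, of "\<lambda>(a, b, c). (b, c)"]
      by simp_all
    moreover have "mass M ?V (a, b, c) / (mass M ?AC (a, c) * (mass M ?BC (b, c) / mass M C c))
        = mass M ?V (a, b, c) * mass M C c / (mass M ?AC (a, c) * mass M ?BC (b, c))"
      by (simp add: divide_inverse mult_ac)
    ultimately have "mass M ?V (a, b, c) / (mass M ?AC (a, c) * (mass M ?BC (b, c) / mass M C c)) = 1"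
      using factorizes[of a b c] by simp
    then show ?thesis
      by (simp only: log_one mult_zero_right)
  qed simp
  have "cmi M A B C = 0"
    unfolding cmi_eq_sum[OF A B C] by (intro sum.neutral) (auto simp only: summand_0 split: prod.splits)
  then show ?thesis
    unfolding cmi_def cond_ent_def by simp
qed

lemma ent_pair_unit:
  assumes "simple_function M X"
  shows "ent M (\<lambda>w. (X w, ())) = ent M X"
  by (rule ent_relabel[where g = "\<lambda>x. (x, ())" and h = fst]) (use assms in auto)

text \<open>Independence is conditional independence given a constant.\<close>
lemma ent_pair_indep:
  assumes A: "simple_function M A" and B: "simple_function M B" and indep: "indep_disc M A B"
  shows "ent M (\<lambda>w. (A w, B w)) = ent M A + ent M B"
proof -
  have "ent M (\<lambda>w. (A w, B w, ())) + ent M (\<lambda>w. ()) = ent M (\<lambda>w. (A w, ())) + ent M (\<lambda>w. (B w, ()))"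
  proof (rule ent_split_if_cond_indep[OF A B])
    fix a b and u :: unit
    have "(\<lambda>w. (A w, B w, ())) -` {(a, b, u)} \<inter> space M = {w \<in> space M. A w = a \<and> B w = b}"
      "(\<lambda>w. (A w, ())) -` {(a, u)} \<inter> space M = {w \<in> space M. A w = a}"
      "(\<lambda>w. (B w, ())) -` {(b, u)} \<inter> space M = {w \<in> space M. B w = b}"
      by auto
    then show "mass M (\<lambda>w. (A w, B w, ())) (a, b, u) * mass M (\<lambda>w. ()) u
      = mass M (\<lambda>w. (A w, ())) (a, u) * mass M (\<lambda>w. (B w, ())) (b, u)"
      using indep unfolding indep_disc_def by (simp add: mass_def prob_space)
  qed simp
  moreover have "ent M (\<lambda>w. (A w, B w, ())) = ent M (\<lambda>w. (A w, B w))"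
    by (rule ent_relabel[where g = "\<lambda>(a, b). (a, b, ())" and h = "\<lambda>(a, b, u). (a, b)"]) (use A B in auto)
  ultimately show ?thesis
    using ent_pair_unit[OF A] ent_pair_unit[OF B] by (simp add: ent_const)
qed

lemma cond_ent_diff_swap:
  assumes "simple_function M A" "simple_function M B" "simple_function M C"
  shows "cond_ent M A (\<lambda>w. (B w, C w)) - cond_ent M C (\<lambda>w. (B w, A w))
    = ent M (\<lambda>w. (B w, A w)) - ent M (\<lambda>w. (B w, C w))"
proof -
  have "ent M (\<lambda>w. (A w, B w, C w)) = ent M (\<lambda>w. (C w, B w, A w))"
    by (rule ent_relabel[where g = "\<lambda>(c, b, a). (a, b, c)" and h = "\<lambda>(a, b, c). (c, b, a)"])
      (use assms in auto)
  then show ?thesis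
    unfolding cond_ent_def by simp
qed

lemma indep_disc_block_next:
  fixes X :: "nat \<Rightarrow> 'a \<Rightarrow> 'x::countable"
  assumes indep: "indep_vars (\<lambda>_. count_space UNIV) X {1..k}" and "n < k"
  shows "indep_disc M (\<lambda>w. map (\<lambda>i. X i w) [1..<n+1]) (X (Suc n))"
proof -
  define block where "block w = map (\<lambda>i. X i w) [1..<n+1]" for w
  \<comment> \<open>indep_var needs both variables to have the same type, hence the singleton list.\<close>
  let ?block = "\<lambda>z :: nat \<Rightarrow> 'x. map z [1..<n+1]" and ?next = "\<lambda>z :: nat \<Rightarrow> 'x. [z (Suc n)]"
  have "indep_var (PiM {1..n} (\<lambda>_. count_space UNIV)) (\<lambda>w. restrict (\<lambda>i. X i w) {1..n})
      (PiM {Suc n} (\<lambda>_. count_space UNIV)) (\<lambda>w. restrict (\<lambda>i. X i w) {Suc n})"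
    using \<open>n < k\<close> by (intro indep_var_restrict[OF indep]) auto
  moreover have "?block \<in> measurable (PiM {1..n} (\<lambda>_. count_space UNIV)) (count_space UNIV)"
    by (rule measurable_map_list, rule measurable_component_singleton) auto
  moreover have "?next \<in> measurable (PiM {Suc n} (\<lambda>_. count_space UNIV)) (count_space UNIV)"
    using measurable_map_list[of "[Suc n]" "\<lambda>i z. z i"] by (simp add: measurable_component_singleton)
  ultimately have "indep_var (count_space UNIV) (?block \<circ> (\<lambda>w. restrict (\<lambda>i. X i w) {1..n}))
      (count_space UNIV) (?next \<circ> (\<lambda>w. restrict (\<lambda>i. X i w) {Suc n}))"
    by (rule indep_var_compose)
  moreover have "?block \<circ> (\<lambda>w. restrict (\<lambda>i. X i w) {1..n}) = block"
    "?next \<circ> (\<lambda>w. restrict (\<lambda>i. X i w) {Suc n}) = (\<lambda>w. [X (Suc n) w])"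
    by (auto simp: fun_eq_iff block_def)
  ultimately have block_indep: "indep_var (count_space UNIV) block (count_space UNIV) (\<lambda>w. [X (Suc n) w])"
    by simp
  have "prob {w \<in> space M. block w = xs \<and> X (Suc n) w = x}
    = prob {w \<in> space M. block w = xs} * prob {w \<in> space M. X (Suc n) w = x}" for xs x
  proof -
    have "{w \<in> space M. block w = xs \<and> X (Suc n) w = x}
        = (\<lambda>w. (block w, [X (Suc n) w])) -` ({xs} \<times> {[x]}) \<inter> space M"
      "{w \<in> space M. block w = xs} = block -` {xs} \<inter> space M"
      "{w \<in> space M. X (Suc n) w = x} = (\<lambda>w. [X (Suc n) w]) -` {[x]} \<inter> space M"
      by auto
    then show ?thesis
      using indep_varD[OF block_indep, of "{xs}" "{[x]}"] by simp
  qed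
  then show ?thesis
    unfolding indep_disc_def block_def by blast
qed

lemma ent_iid_block:
  fixes X :: "nat \<Rightarrow> 'a \<Rightarrow> 'x::finite"
  assumes meas: "\<And>i. i \<in> {1..k} \<Longrightarrow> X i \<in> measurable M (count_space UNIV)"
    and ident: "\<And>i. i \<in> {1..k} \<Longrightarrow> distr M (count_space UNIV) (X i) = distr M (count_space UNIV) (X 1)"
    and indep: "indep_vars (\<lambda>_. count_space UNIV) X {1..k}"
    and "n \<le> k"
  shows "ent M (\<lambda>w. map (\<lambda>i. X i w) [1..<n+1]) = real n * ent M (X 1)"
  using \<open>n \<le> k\<close>
proof (induction n)
  case 0
  then show ?case
    by (simp add: ent_const)
next
  case (Suc n)
  have X_next: "simple_function M (X (Suc n))" and X_1: "simple_function M (X 1)"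
    using Suc.prems meas by (auto intro: simple_function_finite_type)
  have block: "simple_function M (\<lambda>w. map (\<lambda>i. X i w) [1..<n+1])"
    using Suc.prems meas by (intro simple_function_map_list) auto
  have "ent M (\<lambda>w. map (\<lambda>i. X i w) [1..<Suc n+1]) = ent M (\<lambda>w. (map (\<lambda>i. X i w) [1..<n+1], X (Suc n) w))"
    by (rule ent_relabel[where g = "\<lambda>(xs, x). xs @ [x]" and h = "\<lambda>xs. (butlast xs, last xs)"])
      (use block X_next in auto)
  also have "\<dots> = ent M (\<lambda>w. map (\<lambda>i. X i w) [1..<n+1]) + ent M (X (Suc n))"
    using Suc.prems by (intro ent_pair_indep block X_next indep_disc_block_next[OF indep]) simp
  also have "ent M (X (Suc n)) = ent M (X 1)"
    using Suc.prems by (intro ent_eq_if_distr_eq X_next X_1 ident) simp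
  finally show ?case
    using Suc by (simp add: algebra_simps)
qed

end

section \<open>Stationary generators\<close>

lemma length_ywin [simp]: "length (ywin Y a n w) = n"
  by (simp add: ywin_def)

lemma ywin_add: "ywin Y a (m + n) w = ywin Y a m w @ ywin Y (a + int m) n w"
  by (induction n) (simp_all add: ywin_def algebra_simps)

lemma ywin_Suc: "ywin Y a (Suc n) w = ywin Y a n w @ [Y (a + int n) w]"
  using ywin_add[of Y a n 1 w] by (simp add: ywin_def)

lemma ywin_Suc_left: "ywin Y a (Suc n) w = Y a w # ywin Y (a + 1) n w"
  using ywin_add[of Y a 1 n w] by (simp add: ywin_def)

locale stationary_generator = prob_space M for M :: "'w measure" +
  fixes Y :: "int \<Rightarrow> 'w \<Rightarrow> 'y::finite" and R :: "int \<Rightarrow> 'w \<Rightarrow> 'r::finite"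
  assumes measurable_Y: "\<And>t. Y t \<in> measurable M (count_space UNIV)"
    and measurable_R: "\<And>t. R t \<in> measurable M (count_space UNIV)"
    and stationary: "jointly_stationary M Y R"
    and generator: "generator_cond M Y R"
begin

lemma simple_Y: "simple_function M (Y t)"
  by (rule simple_function_finite_type[OF measurable_Y])

lemma simple_R: "simple_function M (R t)"
  by (rule simple_function_finite_type[OF measurable_R])

lemma simple_ywin: "simple_function M (ywin Y a n)"
  unfolding ywin_def[abs_def] by (rule simple_function_map_list[OF measurable_Y])

abbreviation path_space :: "(int \<Rightarrow> 'y \<times> 'r) measure" where
  "path_space \<equiv> PiM UNIV (\<lambda>_. count_space UNIV)"

definition shifted_path :: "nat \<Rightarrow> 'w \<Rightarrow> int \<Rightarrow> 'y \<times> 'r" where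
  "shifted_path n w t = (Y (t + int n) w, R (t + int n) w)"

lemma measurable_shifted_path: "shifted_path n \<in> measurable M path_space"
  unfolding shifted_path_def[abs_def]
  by (intro measurable_PiM_single' measurable_pair_count_space measurable_Y measurable_R) auto

lemma measurable_shift: "(\<lambda>z t. z (t + 1)) \<in> measurable path_space path_space"
  by (intro measurable_PiM_single') (auto simp: space_PiM)

lemma distr_shifted_path: "distr M path_space (shifted_path n) = distr M path_space (shifted_path 0)"
proof (induction n)
  case (Suc n)
  have shift: "shifted_path (Suc m) = (\<lambda>z t. z (t + 1)) \<circ> shifted_path m" for m
    by (auto simp: shifted_path_def fun_eq_iff algebra_simps)
  have "distr M path_space (shifted_path (Suc n))
      = distr (distr M path_space (shifted_path n)) path_space (\<lambda>z t. z (t + 1))"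
    unfolding shift by (rule distr_distr[OF measurable_shift measurable_shifted_path, symmetric])
  also have "\<dots> = distr M path_space (shifted_path 1)"
    using distr_distr[OF measurable_shift measurable_shifted_path, of 0] shift[of 0] by (simp add: Suc)
  also have "\<dots> = distr M path_space (shifted_path 0)"
    using stationary unfolding jointly_stationary_def shifted_path_def[abs_def] by simp
  finally show ?case .
qed simp

lemma ent_shifted_path:
  assumes F: "F \<in> measurable path_space (count_space UNIV)"
    and simple: "\<And>n. simple_function M (\<lambda>w. F (shifted_path n w))"
  shows "ent M (\<lambda>w. F (shifted_path n w)) = ent M (\<lambda>w. F (shifted_path 0 w))"
proof (rule ent_eq_if_distr_eq[OF simple simple])
  have "distr M (count_space UNIV) (\<lambda>w. F (shifted_path m w))
      = distr (distr M path_space (shifted_path m)) (count_space UNIV) F" for m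
    using distr_distr[OF F measurable_shifted_path] by (simp add: comp_def)
  then show "distr M (count_space UNIV) (\<lambda>w. F (shifted_path n w))
    = distr M (count_space UNIV) (\<lambda>w. F (shifted_path 0 w))"
    by (simp only: distr_shifted_path[of n])
qed

lemma measurable_path_Y: "(\<lambda>z. fst (z t)) \<in> measurable path_space (count_space UNIV)"
  using measurable_compose[OF measurable_component_singleton[of t UNIV "\<lambda>_. count_space UNIV"]
      measurable_count_space[of fst]]
  by simp

lemma measurable_path_R: "(\<lambda>z. snd (z t)) \<in> measurable path_space (count_space UNIV)"
  using measurable_compose[OF measurable_component_singleton[of t UNIV "\<lambda>_. count_space UNIV"]
      measurable_count_space[of snd]]
  by simp

lemma ent_ywin_shift: "ent M (ywin Y (a + int n) m) = ent M (ywin Y a m)"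
proof -
  let ?F = "\<lambda>z. map (\<lambda>i. fst (z (a + int i))) [0..<m]"
  have ywin_eq: "ywin Y (a + int n') m = (\<lambda>w. ?F (shifted_path n' w))" for n'
    by (auto simp: ywin_def shifted_path_def fun_eq_iff algebra_simps)
  have "simple_function M (\<lambda>w. ?F (shifted_path n' w))" for n'
    using simple_ywin[of "a + int n'" m] unfolding ywin_eq .
  then have "ent M (\<lambda>w. ?F (shifted_path n w)) = ent M (\<lambda>w. ?F (shifted_path 0 w))"
    by (intro ent_shifted_path measurable_map_list measurable_path_Y)
  then show ?thesis
    using ywin_eq[of n] ywin_eq[of 0] by simp
qed

lemma ent_ywin_R_shift:
  "ent M (\<lambda>w. (ywin Y (a + int n) m w, R (b + int n) w)) = ent M (\<lambda>w. (ywin Y a m w, R b w))"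
proof -
  let ?F = "\<lambda>z. (map (\<lambda>i. fst (z (a + int i))) [0..<m], snd (z b))"
  have ywin_eq: "(\<lambda>w. (ywin Y (a + int n') m w, R (b + int n') w)) = (\<lambda>w. ?F (shifted_path n' w))" for n'
    by (auto simp: ywin_def shifted_path_def fun_eq_iff algebra_simps)
  have "simple_function M (\<lambda>w. (ywin Y (a + int n') m w, R (b + int n') w))" for n'
    using simple_ywin simple_R by simp
  then have "ent M (\<lambda>w. ?F (shifted_path n w)) = ent M (\<lambda>w. ?F (shifted_path 0 w))"
    unfolding ywin_eq
    by (intro ent_shifted_path measurable_pair_count_space measurable_map_list measurable_path_Y measurable_path_R)
  then show ?thesis
    using ywin_eq[of n] ywin_eq[of 0] by simp
qed

definition past :: "int \<Rightarrow> 'w \<Rightarrow> (int \<Rightarrow> 'y) \<times> (int \<Rightarrow> 'r)" where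
  "past t w = (restrict (\<lambda>s. Y s w) {..t}, restrict (\<lambda>s. R s w) {..<t})"

definition future :: "int \<Rightarrow> 'w \<Rightarrow> (int \<Rightarrow> 'y) \<times> (int \<Rightarrow> 'r)" where
  "future t w = (restrict (\<lambda>s. Y s w) {t<..}, restrict (\<lambda>s. R s w) {t<..})"

abbreviation past_space :: "int \<Rightarrow> ((int \<Rightarrow> 'y) \<times> (int \<Rightarrow> 'r)) measure" where
  "past_space t \<equiv> PiM {..t} (\<lambda>_. count_space UNIV) \<Otimes>\<^sub>M PiM {..<t} (\<lambda>_. count_space UNIV)"

abbreviation future_space :: "int \<Rightarrow> ((int \<Rightarrow> 'y) \<times> (int \<Rightarrow> 'r)) measure" where
  "future_space t \<equiv> PiM {t<..} (\<lambda>_. count_space UNIV) \<Otimes>\<^sub>M PiM {t<..} (\<lambda>_. count_space UNIV)"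

lemma ent_split_past_future:
  assumes G: "G \<in> measurable (past_space t) (count_space UNIV)"
    and G': "G' \<in> measurable (future_space t) (count_space UNIV)"
    and A: "simple_function M A" and B: "simple_function M B"
    and A_past: "\<And>w. w \<in> space M \<Longrightarrow> A w = G (past t w)"
    and B_future: "\<And>w. w \<in> space M \<Longrightarrow> B w = G' (future t w)"
  shows "ent M (\<lambda>w. (A w, B w, R t w)) + ent M (R t) = ent M (\<lambda>w. (A w, R t w)) + ent M (\<lambda>w. (B w, R t w))"
proof (rule ent_split_if_cond_indep[OF A B simple_R])
  fix a b r
  define S where "S = G -` {a} \<inter> space (past_space t)"
  define T where "T = G' -` {b} \<inter> space (future_space t)"
  have "S \<in> sets (past_space t)" "T \<in> sets (future_space t)"
    unfolding S_def T_def by (auto intro: measurable_sets G G')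
  then have "measure M {w \<in> space M. past t w \<in> S \<and> future t w \<in> T \<and> R t w = r} * measure M {w \<in> space M. R t w = r}
    = measure M {w \<in> space M. past t w \<in> S \<and> R t w = r} * measure M {w \<in> space M. future t w \<in> T \<and> R t w = r}"
    using generator unfolding generator_cond_def cond_indep_def past_def[abs_def] future_def[abs_def] by blast
  moreover have "past t w \<in> space (past_space t)" "future t w \<in> space (future_space t)" for w
    by (simp_all add: past_def future_def space_pair_measure space_PiM)
  then have "{w \<in> space M. past t w \<in> S \<and> future t w \<in> T \<and> R t w = r}
      = (\<lambda>w. (A w, B w, R t w)) -` {(a, b, r)} \<inter> space M"
    "{w \<in> space M. R t w = r} = R t -` {r} \<inter> space M"
    "{w \<in> space M. past t w \<in> S \<and> R t w = r} = (\<lambda>w. (A w, R t w)) -` {(a, r)} \<inter> space M"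
    "{w \<in> space M. future t w \<in> T \<and> R t w = r} = (\<lambda>w. (B w, R t w)) -` {(b, r)} \<inter> space M"
    unfolding S_def T_def by (auto simp: A_past B_future)
  ultimately show "mass M (\<lambda>w. (A w, B w, R t w)) (a, b, r) * mass M (R t) r
    = mass M (\<lambda>w. (A w, R t w)) (a, r) * mass M (\<lambda>w. (B w, R t w)) (b, r)"
    unfolding mass_def by simp
qed

lemma measurable_past_ywin:
  assumes "a + int n \<le> t + 1"
  shows "(\<lambda>p. map (\<lambda>i. fst p (a + int i)) [0..<n]) \<in> measurable (past_space t) (count_space UNIV)"
  using assms
  by (intro measurable_map_list measurable_compose[OF measurable_fst measurable_component_singleton]) auto

lemma measurable_future_ywin:
  assumes "t < b"
  shows "(\<lambda>p. map (\<lambda>i. fst p (b + int i)) [0..<m]) \<in> measurable (future_space t) (count_space UNIV)"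
  using assms
  by (intro measurable_map_list measurable_compose[OF measurable_fst measurable_component_singleton]) auto

lemma measurable_future_R:
  assumes "t < s"
  shows "(\<lambda>p. snd p s) \<in> measurable (future_space t) (count_space UNIV)"
  using assms by (intro measurable_compose[OF measurable_snd measurable_component_singleton]) auto

lemma ent_split_ywin:
  assumes "a + int n \<le> t + 1" "t < b"
  shows "ent M (\<lambda>w. (ywin Y a n w, ywin Y b m w, R t w)) + ent M (R t)
    = ent M (\<lambda>w. (ywin Y a n w, R t w)) + ent M (\<lambda>w. (ywin Y b m w, R t w))"
  using assms
  by (intro ent_split_past_future[OF measurable_past_ywin measurable_future_ywin simple_ywin simple_ywin])
    (auto simp: ywin_def past_def future_def)

lemma ent_split_ywin_R:
  assumes "a + int n \<le> t + 1" "t < b" "t < s"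
  shows "ent M (\<lambda>w. (ywin Y a n w, (ywin Y b m w, R s w), R t w)) + ent M (R t)
    = ent M (\<lambda>w. (ywin Y a n w, R t w)) + ent M (\<lambda>w. ((ywin Y b m w, R s w), R t w))"
  using assms
  by (intro ent_split_past_future[OF measurable_past_ywin
        measurable_pair_count_space[OF measurable_future_ywin measurable_future_R[of t s]] simple_ywin
        simple_function_Pair[OF simple_ywin simple_R]])
    (auto simp: ywin_def past_def future_def)

abbreviation past_window :: "nat \<Rightarrow> 'w \<Rightarrow> 'y list" where
  "past_window L \<equiv> ywin Y (1 - int L) L"

lemma past_window_Suc: "past_window (Suc L) w = Y (- int L) w # past_window L w"
  using ywin_Suc_left[of Y "1 - int (Suc L)" L w] by (simp add: algebra_simps)

lemma cond_ent_past_window_Suc_le: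
  assumes A: "simple_function M A"
  shows "cond_ent M A (past_window (Suc L)) \<le> cond_ent M A (past_window L)"
proof -
  have "ent M (past_window (Suc L)) = ent M (\<lambda>w. (Y (- int L) w, past_window L w))"
    "ent M (\<lambda>w. (A w, past_window (Suc L) w)) = ent M (\<lambda>w. (A w, Y (- int L) w, past_window L w))"
    by (rule ent_relabel[where g = "\<lambda>(y, p). y # p" and h = "\<lambda>p. (hd p, tl p)"],
        use simple_Y simple_ywin past_window_Suc in auto)
      (rule ent_relabel[where g = "\<lambda>(a, y, p). (a, y # p)" and h = "\<lambda>(a, p). (a, hd p, tl p)"],
        use A simple_Y simple_ywin past_window_Suc in auto)
  then have "cond_ent M A (past_window (Suc L)) = cond_ent M A (\<lambda>w. (Y (- int L) w, past_window L w))"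
    unfolding cond_ent_def by simp
  then show ?thesis
    using cmi_nonneg[OF A simple_Y simple_ywin, of "- int L" "1 - int L" L] unfolding cmi_def by simp
qed

lemma convergent_cond_ent_past_window:
  assumes A: "simple_function M A"
  shows "convergent (\<lambda>L. cond_ent M A (past_window L))"
proof -
  have "decseq (\<lambda>L. cond_ent M A (past_window L))"
    unfolding decseq_Suc_iff using cond_ent_past_window_Suc_le[OF A] by blast
  moreover have "\<forall>L. 0 \<le> cond_ent M A (past_window L)"
    using cond_ent_nonneg[OF A simple_ywin] by blast
  ultimately show ?thesis
    by (rule decseq_convergent) (auto simp: convergent_def)
qed

lemma cond_ent_tendsto_entropy_rate:
  "(\<lambda>L. cond_ent M (Y 1) (past_window L)) \<longlonglongrightarrow> entropy_rate M Y"
  unfolding entropy_rate_def using convergent_cond_ent_past_window[OF simple_Y]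
  by (simp add: convergent_LIMSEQ_iff)

lemma ent_ywin_Suc_diff:
  "ent M (ywin Y (1 - int L) (Suc (L + m))) - ent M (ywin Y (1 - int L) (L + m))
    = cond_ent M (Y 1) (past_window (L + m))"
proof -
  have start: "1 - int L = 1 - int (L + m) + int m"
    by simp
  have "ent M (ywin Y (1 - int (L + m)) (Suc (L + m))) = ent M (\<lambda>w. (Y 1 w, past_window (L + m) w))"
    by (rule ent_relabel[where g = "\<lambda>(y, p). p @ [y]" and h = "\<lambda>p. (last p, butlast p)"])
      (use simple_Y simple_ywin in \<open>auto simp: ywin_Suc\<close>)
  then show ?thesis
    unfolding start ent_ywin_shift cond_ent_def by simp
qed

lemma ent_past_window_extend:
  "ent M (ywin Y (1 - int L) (L + m)) - ent M (past_window L) = (\<Sum>j<m. cond_ent M (Y 1) (past_window (L + j)))"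
proof (induction m)
  case (Suc m)
  then show ?case
    using ent_ywin_Suc_diff[of L m] by simp
qed simp

lemma cond_ent_block_past_window:
  "cond_ent M (ywin Y 1 k) (past_window L) = (\<Sum>j<k. cond_ent M (Y 1) (past_window (L + j)))"
proof -
  have "ent M (\<lambda>w. (ywin Y 1 k w, past_window L w)) = ent M (ywin Y (1 - int L) (L + k))"
    by (rule ent_relabel[where g = "\<lambda>q. (drop L q, take L q)" and h = "\<lambda>(x, p). p @ x"])
      (use simple_ywin in \<open>auto simp: ywin_add\<close>)
  then show ?thesis
    using ent_past_window_extend[of L k] unfolding cond_ent_def by simp
qed

lemma cond_ent_block_tendsto:
  "(\<lambda>L. cond_ent M (ywin Y 1 k) (past_window L)) \<longlonglongrightarrow> real k * entropy_rate M Y"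
proof -
  have "(\<lambda>L. \<Sum>j<k. cond_ent M (Y 1) (past_window (L + j))) \<longlonglongrightarrow> (\<Sum>j<k. entropy_rate M Y)"
    by (intro tendsto_sum LIMSEQ_ignore_initial_segment cond_ent_tendsto_entropy_rate)
  then show ?thesis
    unfolding cond_ent_block_past_window by simp
qed

lemma cmi_block_R0_past_window:
  "cmi M (ywin Y 1 k) (R 0) (past_window L)
    = cond_ent M (ywin Y 1 k) (past_window L) - ent M (\<lambda>w. (ywin Y 1 k w, R 0 w)) + ent M (R 0)"
proof -
  have "ent M (\<lambda>w. (past_window L w, ywin Y 1 k w, R 0 w)) + ent M (R 0)
      = ent M (\<lambda>w. (past_window L w, R 0 w)) + ent M (\<lambda>w. (ywin Y 1 k w, R 0 w))"
    by (rule ent_split_ywin) simp_all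
  moreover have "ent M (\<lambda>w. (ywin Y 1 k w, R 0 w, past_window L w))
      = ent M (\<lambda>w. (past_window L w, ywin Y 1 k w, R 0 w))"
    by (rule ent_relabel[where g = "\<lambda>(p, x, r). (x, r, p)" and h = "\<lambda>(x, r, p). (p, x, r)"])
      (use simple_ywin simple_R in auto)
  moreover have "ent M (\<lambda>w. (R 0 w, past_window L w)) = ent M (\<lambda>w. (past_window L w, R 0 w))"
    by (rule ent_swap[OF simple_R simple_ywin])
  ultimately show ?thesis
    unfolding cmi_def cond_ent_def by simp
qed

lemma oracular_info_eq:
  "oracular_info M Y R k = real k * entropy_rate M Y - ent M (\<lambda>w. (ywin Y 1 k w, R 0 w)) + ent M (R 0)"
  unfolding oracular_info_def cmi_block_R0_past_window
  by (intro limI tendsto_intros cond_ent_block_tendsto)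

lemma cmi_past_window_R0_given_future:
  assumes "1 \<le> k"
  shows "cmi M (past_window L) (R 0) (\<lambda>w. (ywin Y 1 L w, R (int k) w))
    = ent M (\<lambda>w. (past_window L w, ywin Y 1 L w, R (int k) w)) - ent M (\<lambda>w. (ywin Y 1 L w, R (int k) w))
      - ent M (\<lambda>w. (past_window L w, R 0 w)) + ent M (R 0)"
proof -
  have "ent M (\<lambda>w. (past_window L w, (ywin Y 1 L w, R (int k) w), R 0 w)) + ent M (R 0)
      = ent M (\<lambda>w. (past_window L w, R 0 w)) + ent M (\<lambda>w. ((ywin Y 1 L w, R (int k) w), R 0 w))"
    using assms by (intro ent_split_ywin_R) simp_all
  moreover have "ent M (\<lambda>w. (past_window L w, R 0 w, ywin Y 1 L w, R (int k) w))
      = ent M (\<lambda>w. (past_window L w, (ywin Y 1 L w, R (int k) w), R 0 w))"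
    by (rule ent_relabel[where g = "\<lambda>(p, (f, r), z). (p, z, f, r)" and h = "\<lambda>(p, z, f, r). (p, (f, r), z)"])
      (use simple_ywin simple_R in auto)
  moreover have "ent M (\<lambda>w. (R 0 w, ywin Y 1 L w, R (int k) w))
      = ent M (\<lambda>w. ((ywin Y 1 L w, R (int k) w), R 0 w))"
    by (rule ent_relabel[where g = "\<lambda>((f, r), z). (z, f, r)" and h = "\<lambda>(z, f, r). ((f, r), z)"])
      (use simple_ywin simple_R in auto)
  ultimately show ?thesis
    unfolding cmi_def cond_ent_def by simp
qed

text \<open>Split Y_{1:L} = Y_{1:k} Y_{k+1:L}: given R_k, the block Y_{k+1:L} is independent of everything
  up to time k, and shifting by k turns (Y_{-L+1:k}, R_k) into (Y_{-L-k+1:0}, R_0).\<close>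
lemma ent_past_window_future_Rk:
  assumes "k \<le> L"
  shows "ent M (\<lambda>w. (past_window L w, ywin Y 1 L w, R (int k) w)) - ent M (\<lambda>w. (ywin Y 1 L w, R (int k) w))
    = ent M (\<lambda>w. (past_window (L + k) w, R 0 w)) - ent M (\<lambda>w. (ywin Y 1 k w, R (int k) w))"
proof -
  let ?Q = "ywin Y (1 - int L) (L + k)" and ?V = "ywin Y (1 + int k) (L - k)" and ?W = "ywin Y 1 k"
  have future_split: "ywin Y 1 L w = ?W w @ ?V w" for w
    using ywin_add[of Y 1 k "L - k" w] assms by simp
  have Q_split: "?Q w = past_window L w @ ?W w" for w
    using ywin_add[of Y "1 - int L" L k w] by simp
  have QV: "simple_function M (\<lambda>w. (?Q w, ?V w, R (int k) w))"
    using simple_ywin simple_R by simp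
  have "ent M (\<lambda>w. (?Q w, ?V w, R (int k) w)) + ent M (R (int k))
      = ent M (\<lambda>w. (?Q w, R (int k) w)) + ent M (\<lambda>w. (?V w, R (int k) w))"
    "ent M (\<lambda>w. (?W w, ?V w, R (int k) w)) + ent M (R (int k))
      = ent M (\<lambda>w. (?W w, R (int k) w)) + ent M (\<lambda>w. (?V w, R (int k) w))"
    by (rule ent_split_ywin, simp_all)+
  moreover have "ent M (\<lambda>w. (past_window L w, ywin Y 1 L w, R (int k) w)) = ent M (\<lambda>w. (?Q w, ?V w, R (int k) w))"
    by (rule ent_relabel[OF QV, where g = "\<lambda>(q, v, r). (take L q, drop L q @ v, r)"
          and h = "\<lambda>(p, f, r). (p @ take k f, drop k f, r)"])
      (auto simp: future_split Q_split)
  moreover have "ent M (\<lambda>w. (ywin Y 1 L w, R (int k) w)) = ent M (\<lambda>w. (?W w, ?V w, R (int k) w))"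
    by (rule ent_relabel[where g = "\<lambda>(x, v, r). (x @ v, r)" and h = "\<lambda>(f, r). (take k f, drop k f, r)"])
      (use simple_ywin simple_R in \<open>auto simp: future_split\<close>)
  moreover have "ent M (\<lambda>w. (?Q w, R (int k) w)) = ent M (\<lambda>w. (past_window (L + k) w, R 0 w))"
    using ent_ywin_R_shift[of "1 - int (L + k)" k "L + k" 0] by simp
  ultimately show ?thesis
    by simp
qed

lemma ent_past_window_R0_increment_tendsto:
  "(\<lambda>L. ent M (\<lambda>w. (past_window (L + k) w, R 0 w)) - ent M (\<lambda>w. (past_window L w, R 0 w)))
    \<longlonglongrightarrow> real k * entropy_rate M Y"
proof -
  define g where "g L = cond_ent M (R 0) (past_window L)" for L
  have "ent M (past_window (L + k)) = ent M (ywin Y (1 - int L) (L + k))" for L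
    using ent_ywin_shift[of "1 - int (L + k)" k "L + k"] by simp
  then have "ent M (\<lambda>w. (past_window (L + k) w, R 0 w)) - ent M (\<lambda>w. (past_window L w, R 0 w))
      = cond_ent M (ywin Y 1 k) (past_window L) + g (L + k) - g L" for L
    using ent_past_window_extend[of L k] cond_ent_block_past_window[of k L]
      ent_swap[OF simple_R simple_ywin, of 0 "1 - int L" L]
      ent_swap[OF simple_R simple_ywin, of 0 "1 - int (L + k)" "L + k"]
    unfolding g_def cond_ent_def by simp
  moreover obtain g_lim where "g \<longlonglongrightarrow> g_lim"
    using convergent_cond_ent_past_window[OF simple_R] unfolding g_def convergent_def by blast
  then have "(\<lambda>L. cond_ent M (ywin Y 1 k) (past_window L) + g (L + k) - g L)
      \<longlonglongrightarrow> real k * entropy_rate M Y + g_lim - g_lim"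
    by (intro tendsto_intros cond_ent_block_tendsto LIMSEQ_ignore_initial_segment)
  ultimately show ?thesis
    by simp
qed

lemma cmi_past_window_R0_given_future_tendsto:
  assumes "1 \<le> k"
  shows "(\<lambda>L. cmi M (past_window L) (R 0) (\<lambda>w. (ywin Y 1 L w, R (int k) w)))
    \<longlonglongrightarrow> real k * entropy_rate M Y - ent M (\<lambda>w. (ywin Y 1 k w, R (int k) w)) + ent M (R 0)"
proof (rule LIMSEQ_offset[where k = k])
  have "cmi M (past_window (L + k)) (R 0) (\<lambda>w. (ywin Y 1 (L + k) w, R (int k) w))
    = ent M (\<lambda>w. (past_window (L + k + k) w, R 0 w)) - ent M (\<lambda>w. (past_window (L + k) w, R 0 w))
      - ent M (\<lambda>w. (ywin Y 1 k w, R (int k) w)) + ent M (R 0)" for L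
    using cmi_past_window_R0_given_future[OF assms, of "L + k"] ent_past_window_future_Rk[of k "L + k"] by simp
  moreover have "(\<lambda>L. ent M (\<lambda>w. (past_window (L + k + k) w, R 0 w)) - ent M (\<lambda>w. (past_window (L + k) w, R 0 w))
      - ent M (\<lambda>w. (ywin Y 1 k w, R (int k) w)) + ent M (R 0))
    \<longlonglongrightarrow> real k * entropy_rate M Y - ent M (\<lambda>w. (ywin Y 1 k w, R (int k) w)) + ent M (R 0)"
    using LIMSEQ_ignore_initial_segment[OF ent_past_window_R0_increment_tendsto, of k]
    by (intro tendsto_add tendsto_diff tendsto_const)
  ultimately show "(\<lambda>L. cmi M (past_window (L + k)) (R 0) (\<lambda>w. (ywin Y 1 (L + k) w, R (int k) w)))
    \<longlonglongrightarrow> real k * entropy_rate M Y - ent M (\<lambda>w. (ywin Y 1 k w, R (int k) w)) + ent M (R 0)"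
    by simp
qed

lemma discarded_cryptic_eq:
  assumes "1 \<le> k"
  shows "discarded_cryptic M Y R k
    = real k * entropy_rate M Y - ent M (\<lambda>w. (ywin Y 1 k w, R (int k) w)) + ent M (R 0)"
  unfolding discarded_cryptic_def by (rule limI[OF cmi_past_window_R0_given_future_tendsto[OF assms]])

lemma discarded_cryptic_nonneg:
  assumes "1 \<le> k"
  shows "0 \<le> discarded_cryptic M Y R k"
  unfolding discarded_cryptic_def limI[OF cmi_past_window_R0_given_future_tendsto[OF assms]]
  by (rule LIMSEQ_le_const[OF cmi_past_window_R0_given_future_tendsto[OF assms]])
    (auto intro: cmi_nonneg simple_ywin simple_R)

lemma discarded_cryptic_decomposition:
  assumes "1 \<le> k"
  shows "cond_ent M (R 0) (\<lambda>w. (ywin Y 1 k w, R (int k) w)) - cond_ent M (R (int k)) (\<lambda>w. (ywin Y 1 k w, R 0 w))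
    + oracular_info M Y R k = discarded_cryptic M Y R k"
  using cond_ent_diff_swap[OF simple_R simple_ywin simple_R, of 0 1 k "int k"]
  unfolding oracular_info_eq discarded_cryptic_eq[OF assms] by simp

lemma ent_R0_iid_minus_ent_Rk_block:
  fixes X :: "nat \<Rightarrow> 'w \<Rightarrow> 'x::finite"
  assumes "1 \<le> k"
    and meas: "\<And>i. i \<in> {1..k} \<Longrightarrow> X i \<in> measurable M (count_space UNIV)"
    and ident: "\<And>i. i \<in> {1..k} \<Longrightarrow> distr M (count_space UNIV) (X i) = distr M (count_space UNIV) (X 1)"
    and indep: "indep_vars (\<lambda>_. count_space UNIV) X {1..k}"
    and indep_R0: "indep_disc M (R 0) (\<lambda>w. map (\<lambda>i. X i w) [1..<k+1])"
  shows "ent M (\<lambda>w. (R 0 w, map (\<lambda>i. X i w) [1..<k+1])) - ent M (\<lambda>w. (R (int k) w, ywin Y 1 k w))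
    = real k * (ent M (X 1) - entropy_rate M Y) + discarded_cryptic M Y R k"
proof -
  have "simple_function M (\<lambda>w. map (\<lambda>i. X i w) [1..<k+1])"
    using meas by (intro simple_function_map_list) auto
  then have "ent M (\<lambda>w. (R 0 w, map (\<lambda>i. X i w) [1..<k+1])) = ent M (R 0) + real k * ent M (X 1)"
    using ent_pair_indep[OF simple_R _ indep_R0] ent_iid_block[OF meas ident indep order_refl] by simp
  then show ?thesis
    using ent_swap[OF simple_R simple_ywin, of "int k" 1 k] discarded_cryptic_eq[OF assms(1)]
    by (simp add: algebra_simps)
qed

end

theorem theorem1:
  fixes M :: "'w measure"
    and Y :: "int \<Rightarrow> 'w \<Rightarrow> 'y::finite"
    and R :: "int \<Rightarrow> 'w \<Rightarrow> 'r::finite"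
    and k :: nat
  assumes "prob_space M"
    and "\<And>t. Y t \<in> measurable M (count_space UNIV)"
    and "\<And>t. R t \<in> measurable M (count_space UNIV)"
    and "jointly_stationary M Y R"
    and "generator_cond M Y R"
    and "k \<ge> 1"
  shows "(cond_ent M (R 0) (\<lambda>w. (ywin Y 1 k w, R (int k) w))
           - cond_ent M (R (int k)) (\<lambda>w. (ywin Y 1 k w, R 0 w))
           + oracular_info M Y R k
         = discarded_cryptic M Y R k)
       \<and> (\<forall>X :: nat \<Rightarrow> 'w \<Rightarrow> 'x::finite.
           (\<forall>i\<in>{1..k}. X i \<in> measurable M (count_space UNIV))
         \<and> (\<forall>i\<in>{1..k}. distr M (count_space UNIV) (X i) = distr M (count_space UNIV) (X 1))
         \<and> prob_space.indep_vars M (\<lambda>_. count_space UNIV) X {1..k}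
         \<and> indep_disc M (R 0) (\<lambda>w. map (\<lambda>i. X i w) [1..<k+1])
         \<longrightarrow>
           ent M (\<lambda>w. (R 0 w, map (\<lambda>i. X i w) [1..<k+1])) - ent M (\<lambda>w. (R (int k) w, ywin Y 1 k w))
             = real k * (ent M (X 1) - entropy_rate M Y) + discarded_cryptic M Y R k
         \<and> ent M (\<lambda>w. (R 0 w, map (\<lambda>i. X i w) [1..<k+1])) - ent M (\<lambda>w. (R (int k) w, ywin Y 1 k w))
             \<ge> real k * (ent M (X 1) - entropy_rate M Y))"
proof -
  interpret stationary_generator M Y R
    using assms(1-5) by (intro stationary_generator.intro stationary_generator_axioms.intro)
  show ?thesis
  proof (intro conjI allI impI, goal_cases)
    case 1
    show ?case
      by (rule discarded_cryptic_decomposition[OF assms(6)])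
  next
    case (2 X)
    then show ?case
      by (intro ent_R0_iid_minus_ent_Rk_block[OF assms(6)]) blast+
  next
    case (3 X)
    then show ?case
      using ent_R0_iid_minus_ent_Rk_block[OF assms(6), of X] discarded_cryptic_nonneg[OF assms(6)] by (smt (verit))
  qed
qed

end
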